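(* Let $\mathcal N_1,\mathcal N_2,\mathcal N_3$ be nested graphs. If $\mu_1:\mathcal N_1\to\mathcal N_2$ and $\mu_2:\mathcal N_2\to\mathcal N_3$ are mergers, then $\mu_2\circ\mu_1$ is a merger. If $\kappa_1:\mathcal N_1\to\mathcal N_2$ and $\kappa_2:\mathcal N_2\to\mathcal N_3$ are contractions, then $\kappa_2\circ\kappa_1$ is a contraction.
   Context: A nested graph is a small category $\mathcal N$ for which there exists at least one functor $G:\mathcal N\to\underline n$ to a finite ordinal $\underline n$ (viewed as the category with a unique morphism $i\to j$ when $i\le j$ and none otherwise) sending every non-identity morphism to a non-identity morphism. Objects are called nodes. A flag is a non-identity morphism, said to be decorated by its domain. A flag is irreducible if it is not a composite of two flags. A vertex of a nested graph is a node that is not the domain of any flag; a corolla is a nested graph with exactly one vertex. A functor $\phi$ contracts a flag $f$ if $\phi(f)$ is an identity. A functor $\phi:\mathcal N_1\to\mathcal N_2$ between nested graphs is admissible if (1) for every irreducible flag $f$ of $\mathcal N_1$, $\phi(f)$ is an identity or an irreducible flag, and (2) for every irreducible flag $f:A\to B$ of $\mathcal N_1$ contracted by $\phi$, $\phi$ contracts every irreducible flag with domain $A$. An epi-functor $\phi:\mathcal N_1\to\mathcal N_2$ is a functor whose image generates all of $\mathcal N_2$ (every morphism of $\mathcal N_2$ is a composite of images of morphisms of $\mathcal N_1$). A merger is an admissible epi-functor $\mu:\mathcal N_1\to\mathcal N_2$ such that $\mathcal N_2$ is a quotient of $\mathcal N_1$ by an equivalence relation on the objects of $\mathcal N_1$.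 A contraction is an admissible epi-functor $\kappa:\mathcal N_1\to\mathcal N_2$ such that for every node $A_2$ of $\mathcal N_2$ the fiber $\kappa^{-1}(A_2)$ (the subcategory of $\mathcal N_1$ of objects mapped to $A_2$ and morphisms mapped to the identity of $A_2$) is a corolla. *)

theory Defs
  imports Main
begin

text \<open>A small category: a set of objects, a set of morphisms, domain, codomain,
  identities and composition; Cmp g f is g after f (defined when Cod f = Dom g).\<close>

record ('o,'m) cat =
  Obj :: "'o set"
  Mor :: "'m set"
  Dom :: "'m \<Rightarrow> 'o"
  Cod :: "'m \<Rightarrow> 'o"
  Idm :: "'o \<Rightarrow> 'm"
  Cmp :: "'m \<Rightarrow> 'm \<Rightarrow> 'm"

definition category :: "('o,'m) cat \<Rightarrow> bool" where
  "category C \<longleftrightarrow>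
     (\<forall>f\<in>Mor C. Dom C f \<in> Obj C \<and> Cod C f \<in> Obj C) \<and>
     (\<forall>A\<in>Obj C. Idm C A \<in> Mor C \<and> Dom C (Idm C A) = A \<and> Cod C (Idm C A) = A) \<and>
     (\<forall>f\<in>Mor C. \<forall>g\<in>Mor C. Cod C f = Dom C g \<longrightarrow>
        Cmp C g f \<in> Mor C \<and> Dom C (Cmp C g f) = Dom C f \<and> Cod C (Cmp C g f) = Cod C g) \<and>
     (\<forall>f\<in>Mor C. Cmp C (Idm C (Cod C f)) f = f \<and> Cmp C f (Idm C (Dom C f)) = f) \<and>
     (\<forall>f\<in>Mor C. \<forall>g\<in>Mor C. \<forall>h\<in>Mor C. Cod C f = Dom C g \<longrightarrow> Cod C g = Dom C h \<longrightarrow>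
        Cmp C h (Cmp C g f) = Cmp C (Cmp C h g) f)"

definition "functor" :: "('o1,'m1) cat \<Rightarrow> ('o2,'m2) cat \<Rightarrow> ('o1 \<Rightarrow> 'o2) \<Rightarrow> ('m1 \<Rightarrow> 'm2) \<Rightarrow> bool" where
  "functor C D Fo Fm \<longleftrightarrow> category C \<and> category D \<and>
     (\<forall>A\<in>Obj C. Fo A \<in> Obj D) \<and>
     (\<forall>f\<in>Mor C. Fm f \<in> Mor D \<and> Dom D (Fm f) = Fo (Dom C f) \<and> Cod D (Fm f) = Fo (Cod C f)) \<and>
     (\<forall>A\<in>Obj C. Fm (Idm C A) = Idm D (Fo A)) \<and>
     (\<forall>f\<in>Mor C. \<forall>g\<in>Mor C. Cod C f = Dom C g \<longrightarrow> Fm (Cmp C g f) = Cmp D (Fm g) (Fm f))"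

definition is_identity :: "('o,'m) cat \<Rightarrow> 'm \<Rightarrow> bool" where
  "is_identity C f \<longleftrightarrow> f = Idm C (Dom C f)"

text \<open>The finite ordinal n = {0 < 1 < ... < n-1}, a unique morphism (i,j) for i \<le> j.\<close>

definition ord_cat :: "nat \<Rightarrow> (nat, nat \<times> nat) cat" where
  "ord_cat n = \<lparr> Obj = {..<n}, Mor = {(i,j). i \<le> j \<and> j < n}, Dom = fst, Cod = snd,
                 Idm = (\<lambda>i. (i,i)), Cmp = (\<lambda>g f. (fst f, snd g)) \<rparr>"

definition nested_graph :: "('o,'m) cat \<Rightarrow> bool" where
  "nested_graph N \<longleftrightarrow> category N \<and>
     (\<exists>n Go Gm. functor N (ord_cat n) Go Gm \<and>
        (\<forall>f\<in>Mor N. \<not> is_identity N f \<longrightarrow> \<not> is_identity (ord_cat n) (Gm f)))"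

definition flag :: "('o,'m) cat \<Rightarrow> 'm \<Rightarrow> bool" where
  "flag N f \<longleftrightarrow> f \<in> Mor N \<and> \<not> is_identity N f"

definition irreducible_flag :: "('o,'m) cat \<Rightarrow> 'm \<Rightarrow> bool" where
  "irreducible_flag N f \<longleftrightarrow> flag N f \<and>
     \<not> (\<exists>g h. flag N g \<and> flag N h \<and> Cod N g = Dom N h \<and> f = Cmp N h g)"

definition vertex :: "('o,'m) cat \<Rightarrow> 'o \<Rightarrow> bool" where
  "vertex N A \<longleftrightarrow> A \<in> Obj N \<and> \<not> (\<exists>f. flag N f \<and> Dom N f = A)"

definition corolla :: "('o,'m) cat \<Rightarrow> bool" where
  "corolla N \<longleftrightarrow> nested_graph N \<and> (\<exists>!v. vertex N v)"

definition admissible :: "('o1,'m1) cat \<Rightarrow> ('o2,'m2) cat \<Rightarrow> ('o1 \<Rightarrow> 'o2) \<Rightarrow> ('m1 \<Rightarrow> 'm2) \<Rightarrow> bool" where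
  "admissible N1 N2 Fo Fm \<longleftrightarrow> functor N1 N2 Fo Fm \<and>
     (\<forall>f. irreducible_flag N1 f \<longrightarrow> is_identity N2 (Fm f) \<or> irreducible_flag N2 (Fm f)) \<and>
     (\<forall>f. irreducible_flag N1 f \<longrightarrow> is_identity N2 (Fm f) \<longrightarrow>
        (\<forall>g. irreducible_flag N1 g \<longrightarrow> Dom N1 g = Dom N1 f \<longrightarrow> is_identity N2 (Fm g)))"

inductive_set generated_by_image :: "('o1,'m1) cat \<Rightarrow> ('o2,'m2) cat \<Rightarrow> ('m1 \<Rightarrow> 'm2) \<Rightarrow> 'm2 set"
  for C D Fm where
  img: "f \<in> Mor C \<Longrightarrow> Fm f \<in> generated_by_image C D Fm"
| comp: "g \<in> generated_by_image C D Fm \<Longrightarrow> h \<in> generated_by_image C D Fm \<Longrightarrow>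
         Cod D g = Dom D h \<Longrightarrow> Cmp D h g \<in> generated_by_image C D Fm"

definition epi_functor :: "('o1,'m1) cat \<Rightarrow> ('o2,'m2) cat \<Rightarrow> ('o1 \<Rightarrow> 'o2) \<Rightarrow> ('m1 \<Rightarrow> 'm2) \<Rightarrow> bool" where
  "epi_functor C D Fo Fm \<longleftrightarrow> functor C D Fo Fm \<and> Mor D \<subseteq> generated_by_image C D Fm"

text \<open>F : C \<rightarrow> D exhibits D as the quotient of C by the equivalence relation
  "F A = F B" on objects: universal property in the category of small categories,
  tested against all small categories whose objects/morphisms live in the types
  given by the itself-argument.\<close>

definition quotient_functor ::
  "('o3 \<times> 'm3) itself \<Rightarrow> ('o1,'m1) cat \<Rightarrow> ('o2,'m2) cat \<Rightarrow> ('o1 \<Rightarrow> 'o2) \<Rightarrow> ('m1 \<Rightarrow> 'm2) \<Rightarrow> bool" where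
  "quotient_functor T C D Fo Fm \<longleftrightarrow> functor C D Fo Fm \<and>
     (\<forall>(E :: ('o3,'m3) cat) Go Gm. functor C E Go Gm \<and>
        (\<forall>A\<in>Obj C. \<forall>B\<in>Obj C. Fo A = Fo B \<longrightarrow> Go A = Go B) \<longrightarrow>
        (\<exists>Ho Hm. functor D E Ho Hm \<and> (\<forall>A\<in>Obj C. Ho (Fo A) = Go A) \<and> (\<forall>f\<in>Mor C. Hm (Fm f) = Gm f)) \<and>
        (\<forall>Ho Hm Ho' Hm'.
           functor D E Ho Hm \<and> (\<forall>A\<in>Obj C. Ho (Fo A) = Go A) \<and> (\<forall>f\<in>Mor C. Hm (Fm f) = Gm f) \<longrightarrow>
           functor D E Ho' Hm' \<and> (\<forall>A\<in>Obj C. Ho' (Fo A) = Go A) \<and> (\<forall>f\<in>Mor C. Hm' (Fm f) = Gm f) \<longrightarrow>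
           (\<forall>A\<in>Obj D. Ho A = Ho' A) \<and> (\<forall>f\<in>Mor D. Hm f = Hm' f)))"

definition merger ::
  "('o3 \<times> 'm3) itself \<Rightarrow> ('o1,'m1) cat \<Rightarrow> ('o2,'m2) cat \<Rightarrow> ('o1 \<Rightarrow> 'o2) \<Rightarrow> ('m1 \<Rightarrow> 'm2) \<Rightarrow> bool" where
  "merger T N1 N2 Fo Fm \<longleftrightarrow> admissible N1 N2 Fo Fm \<and> epi_functor N1 N2 Fo Fm \<and>
     quotient_functor T N1 N2 Fo Fm"

definition fiber :: "('o1,'m1) cat \<Rightarrow> ('o2,'m2) cat \<Rightarrow> ('o1 \<Rightarrow> 'o2) \<Rightarrow> ('m1 \<Rightarrow> 'm2) \<Rightarrow> 'o2 \<Rightarrow> ('o1,'m1) cat" where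
  "fiber N1 N2 Fo Fm A2 = N1 \<lparr> Obj := {A\<in>Obj N1. Fo A = A2},
                               Mor := {f\<in>Mor N1. Fm f = Idm N2 A2} \<rparr>"

definition contraction :: "('o1,'m1) cat \<Rightarrow> ('o2,'m2) cat \<Rightarrow> ('o1 \<Rightarrow> 'o2) \<Rightarrow> ('m1 \<Rightarrow> 'm2) \<Rightarrow> bool" where
  "contraction N1 N2 Fo Fm \<longleftrightarrow> admissible N1 N2 Fo Fm \<and> epi_functor N1 N2 Fo Fm \<and>
     (\<forall>A2\<in>Obj N2. corolla (fiber N1 N2 Fo Fm A2))"

end

theory Submission
  imports Defs
begin

text \<open>For
  mergers, the universal property of the composite quotient is obtained by factoring twice,
  which works because the first merger is surjective on objects. For contractions, the fiber of
  the composite over A3 has as a vertex the vertex of the fiber of the first contraction over the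
  vertex v2 of the fiber of the second one over A3. It is the only one: every vertex w of the
  composite fiber lies over v2, since a contracted flag out of the image of w would begin with the
  image of a flag of N1 that, after peeling off contracted irreducible factors, starts at w and
  is then a flag of the composite fiber.\<close>

lemma category_dom: "category C \<Longrightarrow> f \<in> Mor C \<Longrightarrow> Dom C f \<in> Obj C"
  unfolding category_def by blast

lemma category_cod: "category C \<Longrightarrow> f \<in> Mor C \<Longrightarrow> Cod C f \<in> Obj C"
  unfolding category_def by blast

lemma category_id: "category C \<Longrightarrow> A \<in> Obj C \<Longrightarrow> Idm C A \<in> Mor C"
  unfolding category_def by blast

lemma category_id_dom: "category C \<Longrightarrow> A \<in> Obj C \<Longrightarrow> Dom C (Idm C A) = A"
  unfolding category_def by blast

lemma category_id_cod: "category C \<Longrightarrow> A \<in> Obj C \<Longrightarrow> Cod C (Idm C A) = A"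
  unfolding category_def by blast

lemma category_comp:
  "category C \<Longrightarrow> f \<in> Mor C \<Longrightarrow> g \<in> Mor C \<Longrightarrow> Cod C f = Dom C g \<Longrightarrow> Cmp C g f \<in> Mor C"
  unfolding category_def by blast

lemma category_comp_dom:
  "category C \<Longrightarrow> f \<in> Mor C \<Longrightarrow> g \<in> Mor C \<Longrightarrow> Cod C f = Dom C g \<Longrightarrow> Dom C (Cmp C g f) = Dom C f"
  unfolding category_def by blast

lemma category_comp_cod:
  "category C \<Longrightarrow> f \<in> Mor C \<Longrightarrow> g \<in> Mor C \<Longrightarrow> Cod C f = Dom C g \<Longrightarrow> Cod C (Cmp C g f) = Cod C g"
  unfolding category_def by blast

lemma category_id_left: "category C \<Longrightarrow> f \<in> Mor C \<Longrightarrow> Cmp C (Idm C (Cod C f)) f = f"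
  unfolding category_def by blast

lemma category_id_right: "category C \<Longrightarrow> f \<in> Mor C \<Longrightarrow> Cmp C f (Idm C (Dom C f)) = f"
  unfolding category_def by blast

lemma category_assoc:
  "category C \<Longrightarrow> f \<in> Mor C \<Longrightarrow> g \<in> Mor C \<Longrightarrow> h \<in> Mor C \<Longrightarrow> Cod C f = Dom C g \<Longrightarrow>
    Cod C g = Dom C h \<Longrightarrow> Cmp C h (Cmp C g f) = Cmp C (Cmp C h g) f"
  unfolding category_def by blast

lemma functor_source_category: "functor C D Fo Fm \<Longrightarrow> category C"
  unfolding functor_def by blast

lemma functor_target_category: "functor C D Fo Fm \<Longrightarrow> category D"
  unfolding functor_def by blast

lemma functor_obj: "functor C D Fo Fm \<Longrightarrow> A \<in> Obj C \<Longrightarrow> Fo A \<in> Obj D"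
  unfolding functor_def by blast

lemma functor_mor: "functor C D Fo Fm \<Longrightarrow> f \<in> Mor C \<Longrightarrow> Fm f \<in> Mor D"
  unfolding functor_def by blast

lemma functor_dom: "functor C D Fo Fm \<Longrightarrow> f \<in> Mor C \<Longrightarrow> Dom D (Fm f) = Fo (Dom C f)"
  unfolding functor_def by blast

lemma functor_cod: "functor C D Fo Fm \<Longrightarrow> f \<in> Mor C \<Longrightarrow> Cod D (Fm f) = Fo (Cod C f)"
  unfolding functor_def by blast

lemma functor_id: "functor C D Fo Fm \<Longrightarrow> A \<in> Obj C \<Longrightarrow> Fm (Idm C A) = Idm D (Fo A)"
  unfolding functor_def by blast

lemma functor_comp:
  "functor C D Fo Fm \<Longrightarrow> f \<in> Mor C \<Longrightarrow> g \<in> Mor C \<Longrightarrow> Cod C f = Dom C g \<Longrightarrow>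
    Fm (Cmp C g f) = Cmp D (Fm g) (Fm f)"
  unfolding functor_def by blast

lemma functor_compose:
  "functor C D Fo Fm \<Longrightarrow> functor D E Go Gm \<Longrightarrow> functor C E (Go \<circ> Fo) (Gm \<circ> Fm)"
  unfolding functor_def by auto

lemma functor_is_identity_iff:
  "functor C D Fo Fm \<Longrightarrow> f \<in> Mor C \<Longrightarrow> is_identity D (Fm f) \<longleftrightarrow> Fm f = Idm D (Fo (Dom C f))"
  by (simp add: is_identity_def functor_dom)

lemma functor_preserves_identity:
  assumes F: "functor C D Fo Fm" and f: "f \<in> Mor C" and "is_identity C f"
  shows "is_identity D (Fm f)"
proof -
  have "Fm f = Idm D (Fo (Dom C f))"
    using assms functor_id[OF F category_dom[OF functor_source_category[OF F] f]]
    unfolding is_identity_def by metis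
  then show ?thesis using functor_is_identity_iff[OF F f] by simp
qed

lemma nested_graph_category: "nested_graph N \<Longrightarrow> category N"
  unfolding nested_graph_def by blast

text \<open>The degree of a morphism is the length of the interval of the ordinal it is sent to.\<close>

lemma nested_graph_degree:
  assumes "nested_graph N"
  obtains d :: "'m \<Rightarrow> nat" where
    "\<And>f g. f \<in> Mor N \<Longrightarrow> g \<in> Mor N \<Longrightarrow> Cod N f = Dom N g \<Longrightarrow> d (Cmp N g f) = d f + d g"
    and "\<And>f. flag N f \<Longrightarrow> 0 < d f"
    and "\<And>A. A \<in> Obj N \<Longrightarrow> d (Idm N A) = 0"
proof -
  obtain n Go Gm where G: "functor N (ord_cat n) Go Gm"
    and faithful: "\<forall>f\<in>Mor N. \<not> is_identity N f \<longrightarrow> \<not> is_identity (ord_cat n) (Gm f)"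
    using assms unfolding nested_graph_def by blast
  have C: "category N" using assms by (rule nested_graph_category)
  have G_mor: "Gm f = (Go (Dom N f), Go (Cod N f)) \<and> Go (Dom N f) \<le> Go (Cod N f)"
    if "f \<in> Mor N" for f
    using functor_mor[OF G that] functor_dom[OF G that] functor_cod[OF G that]
    by (cases "Gm f") (auto simp: ord_cat_def)
  show thesis
  proof
    fix f g assume "f \<in> Mor N" "g \<in> Mor N" "Cod N f = Dom N g"
    then show "Go (Cod N (Cmp N g f)) - Go (Dom N (Cmp N g f))
        = (Go (Cod N f) - Go (Dom N f)) + (Go (Cod N g) - Go (Dom N g))"
      using G_mor[of f] G_mor[of g] by (simp add: category_comp_dom[OF C] category_comp_cod[OF C])
  next
    fix f assume "flag N f"
    then have "f \<in> Mor N" "\<not> is_identity (ord_cat n) (Gm f)"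
      using faithful unfolding flag_def by auto
    then show "0 < Go (Cod N f) - Go (Dom N f)"
      using G_mor[of f] by (auto simp: is_identity_def ord_cat_def)
  next
    fix A assume "A \<in> Obj N"
    then show "Go (Cod N (Idm N A)) - Go (Dom N (Idm N A)) = 0"
      by (simp add: category_id_dom[OF C] category_id_cod[OF C])
  qed
qed

lemma nested_graph_identity_factor:
  assumes N: "nested_graph N" and g: "g \<in> Mor N" and h: "h \<in> Mor N" and gh: "Cod N g = Dom N h"
    and id: "is_identity N (Cmp N h g)"
  shows "is_identity N g"
proof -
  have C: "category N" using N by (rule nested_graph_category)
  obtain d :: "_ \<Rightarrow> nat" where
    d_comp: "\<And>f g. f \<in> Mor N \<Longrightarrow> g \<in> Mor N \<Longrightarrow> Cod N f = Dom N g \<Longrightarrow> d (Cmp N g f) = d f + d g"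
    and d_flag: "\<And>f. flag N f \<Longrightarrow> 0 < d f" and d_id: "\<And>A. A \<in> Obj N \<Longrightarrow> d (Idm N A) = 0"
    by (rule nested_graph_degree[OF N]) blast
  have "d (Cmp N h g) = 0"
    using id d_id category_dom[OF C category_comp[OF C g h gh]] unfolding is_identity_def by metis
  then have "d g = 0" using d_comp[OF g h gh] by simp
  then show ?thesis using d_flag g unfolding flag_def by force
qed

lemma irreducible_flag_mor: "irreducible_flag N f \<Longrightarrow> f \<in> Mor N"
  unfolding irreducible_flag_def flag_def by blast

lemma flag_irreducible_first_factor:
  assumes N: "nested_graph N" and "flag N f"
  obtains i r where "irreducible_flag N i" "Dom N i = Dom N f" "r \<in> Mor N" "Cod N i = Dom N r"
    "f = Cmp N r i"
proof -
  have C: "category N" using N by (rule nested_graph_category)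
  obtain d :: "_ \<Rightarrow> nat" where
    d_comp: "\<And>f g. f \<in> Mor N \<Longrightarrow> g \<in> Mor N \<Longrightarrow> Cod N f = Dom N g \<Longrightarrow> d (Cmp N g f) = d f + d g"
    and d_flag: "\<And>f. flag N f \<Longrightarrow> 0 < d f"
    by (rule nested_graph_degree[OF N]) blast
  have "\<exists>i r. irreducible_flag N i \<and> Dom N i = Dom N f \<and> r \<in> Mor N \<and> Cod N i = Dom N r
      \<and> f = Cmp N r i"
    using \<open>flag N f\<close>
  proof (induction f rule: measure_induct_rule[of d])
    case (less f)
    have f: "f \<in> Mor N" using less.prems unfolding flag_def by blast
    show ?case
    proof (cases "irreducible_flag N f")
      case True
      then show ?thesis
        using f category_id[OF C] category_cod[OF C] category_id_dom[OF C] category_id_left[OF C]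
        by (intro exI[of _ f] exI[of _ "Idm N (Cod N f)"]) simp
    next
      case False
      then obtain g h where g: "flag N g" and h: "flag N h" and gh: "Cod N g = Dom N h"
        and f_eq: "f = Cmp N h g"
        using less.prems unfolding irreducible_flag_def by blast
      have gm: "g \<in> Mor N" and hm: "h \<in> Mor N" using g h unfolding flag_def by auto
      have "d g < d f" using d_comp[OF gm hm gh] d_flag[OF h] f_eq by simp
      then obtain i r where i: "irreducible_flag N i" "Dom N i = Dom N g" and r: "r \<in> Mor N"
        and ir: "Cod N i = Dom N r" and g_eq: "g = Cmp N r i"
        using less.IH g by blast
      have im: "i \<in> Mor N" using i(1) by (rule irreducible_flag_mor)
      have rh: "Cod N r = Dom N h" using gh g_eq category_comp_cod[OF C im r ir] by simp
      show ?thesis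
      proof (intro exI conjI)
        show "f = Cmp N (Cmp N h r) i"
          using f_eq g_eq category_assoc[OF C im r hm ir rh] by simp
        show "Dom N i = Dom N f" using i(2) f_eq category_comp_dom[OF C gm hm gh] by simp
        show "Cod N i = Dom N (Cmp N h r)" using ir category_comp_dom[OF C r hm rh] by simp
      qed (use i(1) category_comp[OF C r hm rh] in auto)
    qed
  qed
  then show thesis using that by blast
qed

lemma generated_by_image_mor:
  assumes F: "functor C D Fo Fm"
  shows "g \<in> generated_by_image C D Fm \<Longrightarrow> g \<in> Mor D"
  by (induction rule: generated_by_image.induct)
     (auto intro: functor_mor[OF F] category_comp[OF functor_target_category[OF F]])

lemma generated_by_image_dom:
  assumes F: "functor C D Fo Fm"
  shows "g \<in> generated_by_image C D Fm \<Longrightarrow> \<exists>f\<in>Mor C. Dom D g = Fo (Dom C f)"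
proof (induction rule: generated_by_image.induct)
  case (img f)
  then show ?case using functor_dom[OF F] by blast
next
  case (comp g h)
  then show ?case
    using category_comp_dom[OF functor_target_category[OF F]] generated_by_image_mor[OF F] by metis
qed

lemma epi_functor_obj_surj:
  assumes E: "epi_functor C D Fo Fm" and A: "A \<in> Obj D"
  shows "\<exists>A'\<in>Obj C. Fo A' = A"
proof -
  have F: "functor C D Fo Fm" using E unfolding epi_functor_def by blast
  have D: "category D" using F by (rule functor_target_category)
  have "Idm D A \<in> generated_by_image C D Fm"
    using E category_id[OF D A] unfolding epi_functor_def by blast
  then obtain f where "f \<in> Mor C" "Dom D (Idm D A) = Fo (Dom C f)"
    using generated_by_image_dom[OF F] by blast
  then show ?thesis
    using category_id_dom[OF D A] category_dom[OF functor_source_category[OF F]] by metis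
qed

lemma generated_by_image_functor_image:
  assumes F: "functor C D Fo Fm" and G: "functor D E Go Gm"
  shows "g \<in> generated_by_image C D Fm \<Longrightarrow> Gm g \<in> generated_by_image C E (Gm \<circ> Fm)"
proof (induction rule: generated_by_image.induct)
  case (img f)
  then show ?case using generated_by_image.img[where D = E and Fm = "Gm \<circ> Fm"] by (simp add: comp_def)
next
  case (comp g h)
  have g: "g \<in> Mor D" and h: "h \<in> Mor D" using comp.hyps generated_by_image_mor[OF F] by auto
  have "Gm (Cmp D h g) = Cmp E (Gm h) (Gm g)" using functor_comp[OF G g h comp.hyps(3)] .
  moreover have "Cod E (Gm g) = Dom E (Gm h)"
    using functor_cod[OF G g] functor_dom[OF G h] comp.hyps(3) by simp
  ultimately show ?case using generated_by_image.comp comp.IH by metis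
qed

lemma generated_by_image_compose:
  assumes F: "functor C D Fo Fm" and G: "functor D E Go Gm"
    and gen: "Mor D \<subseteq> generated_by_image C D Fm"
  shows "g \<in> generated_by_image D E Gm \<Longrightarrow> g \<in> generated_by_image C E (Gm \<circ> Fm)"
proof (induction rule: generated_by_image.induct)
  case (img f)
  then show ?case using gen generated_by_image_functor_image[OF F G] by blast
next
  case (comp g h)
  then show ?case by (blast intro: generated_by_image.comp)
qed

lemma epi_functor_compose:
  assumes "epi_functor C D Fo Fm" and "epi_functor D E Go Gm"
  shows "epi_functor C E (Go \<circ> Fo) (Gm \<circ> Fm)"
proof -
  have F: "functor C D Fo Fm" and G: "functor D E Go Gm"
    and "Mor D \<subseteq> generated_by_image C D Fm" and "Mor E \<subseteq> generated_by_image D E Gm"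
    using assms unfolding epi_functor_def by auto
  then show ?thesis
    unfolding epi_functor_def using functor_compose[OF F G] generated_by_image_compose[OF F G]
    by blast
qed

lemma generated_by_image_first_factor:
  assumes F: "functor C D Fo Fm"
  shows "g \<in> generated_by_image C D Fm \<Longrightarrow> \<not> is_identity D g \<Longrightarrow>
    \<exists>f h. f \<in> Mor C \<and> h \<in> Mor D \<and> \<not> is_identity D (Fm f) \<and> Dom D (Fm f) = Dom D g \<and>
          Cod D (Fm f) = Dom D h \<and> g = Cmp D h (Fm f)"
proof (induction rule: generated_by_image.induct)
  case (img f)
  have D: "category D" using F by (rule functor_target_category)
  have "Fm f \<in> Mor D" using functor_mor[OF F img(1)] .
  then show ?case
    using img category_id[OF D] category_cod[OF D] category_id_dom[OF D] category_id_left[OF D]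
    by (intro exI[of _ f] exI[of _ "Idm D (Cod D (Fm f))"]) simp
next
  case (comp g h)
  have D: "category D" using F by (rule functor_target_category)
  have g: "g \<in> Mor D" and h: "h \<in> Mor D" using comp.hyps generated_by_image_mor[OF F] by auto
  have gh: "Cod D g = Dom D h" using comp.hyps(3) .
  have dom_gh: "Dom D (Cmp D h g) = Dom D g" using category_comp_dom[OF D g h gh] .
  show ?case
  proof (cases "is_identity D g")
    case True
    then have "Cod D g = Dom D g" "Cmp D h g = h"
      using category_id_cod[OF D category_dom[OF D g]] category_id_right[OF D h] gh
      unfolding is_identity_def by metis+
    then show ?thesis using comp.IH(2) comp.prems dom_gh by auto
  next
    case False
    then obtain f k where f: "f \<in> Mor C" and k: "k \<in> Mor D" and "\<not> is_identity D (Fm f)"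
      and "Dom D (Fm f) = Dom D g" and fk: "Cod D (Fm f) = Dom D k" and g_eq: "g = Cmp D k (Fm f)"
      using comp.IH(1) by blast
    moreover have Ff: "Fm f \<in> Mor D" using functor_mor[OF F f] .
    moreover have kh: "Cod D k = Dom D h"
      using gh g_eq category_comp_cod[OF D Ff k fk] by simp
    ultimately show ?thesis
      using category_assoc[OF D Ff k h fk kh] category_comp[OF D k h kh]
        category_comp_dom[OF D k h kh] dom_gh
      by (intro exI[of _ f] exI[of _ "Cmp D h k"]) simp
  qed
qed

lemma admissible_functor: "admissible N1 N2 Fo Fm \<Longrightarrow> functor N1 N2 Fo Fm"
  unfolding admissible_def by blast

lemma admissible_irreducible_image:
  "admissible N1 N2 Fo Fm \<Longrightarrow> irreducible_flag N1 f \<Longrightarrow>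
    is_identity N2 (Fm f) \<or> irreducible_flag N2 (Fm f)"
  unfolding admissible_def by blast

lemma admissible_contracts_siblings:
  "admissible N1 N2 Fo Fm \<Longrightarrow> irreducible_flag N1 f \<Longrightarrow> is_identity N2 (Fm f) \<Longrightarrow>
    irreducible_flag N1 g \<Longrightarrow> Dom N1 g = Dom N1 f \<Longrightarrow> is_identity N2 (Fm g)"
  unfolding admissible_def by blast

lemma admissible_compose:
  assumes A1: "admissible N1 N2 Fo Fm" and A2: "admissible N2 N3 Go Gm"
  shows "admissible N1 N3 (Go \<circ> Fo) (Gm \<circ> Fm)"
proof -
  have F: "functor N1 N2 Fo Fm" using A1 by (rule admissible_functor)
  have G: "functor N2 N3 Go Gm" using A2 by (rule admissible_functor)
  have G_id: "is_identity N3 (Gm (Fm f))" if "irreducible_flag N1 f" "is_identity N2 (Fm f)" for f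
    using functor_preserves_identity[OF G functor_mor[OF F irreducible_flag_mor]] that by blast
  have image: "is_identity N3 (Gm (Fm f)) \<or> irreducible_flag N3 (Gm (Fm f))"
    if f: "irreducible_flag N1 f" for f
    using G_id[OF f] admissible_irreducible_image[OF A1 f] admissible_irreducible_image[OF A2]
    by blast
  have siblings: "is_identity N3 (Gm (Fm g))"
    if f: "irreducible_flag N1 f" and f_id: "is_identity N3 (Gm (Fm f))"
      and g: "irreducible_flag N1 g" and fg: "Dom N1 g = Dom N1 f" for f g
  proof (cases "is_identity N2 (Fm f)")
    case True
    then show ?thesis using G_id[OF g] admissible_contracts_siblings[OF A1 f True g fg] by blast
  next
    case False
    have "Dom N2 (Fm g) = Dom N2 (Fm f)"
      using functor_dom[OF F irreducible_flag_mor[OF g]] functor_dom[OF F irreducible_flag_mor[OF f]] fg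
      by simp
    then show ?thesis
      using False G_id[OF g] f_id admissible_irreducible_image[OF A1 f]
        admissible_irreducible_image[OF A1 g] admissible_contracts_siblings[OF A2]
      by metis
  qed
  show ?thesis
    unfolding admissible_def using functor_compose[OF F G] image siblings by auto
qed

section \<open>Quotient functors\<close>

definition factorization ::
  "('o1,'m1) cat \<Rightarrow> ('o2,'m2) cat \<Rightarrow> ('o3,'m3) cat \<Rightarrow> ('o1 \<Rightarrow> 'o2) \<Rightarrow> ('m1 \<Rightarrow> 'm2) \<Rightarrow>
    ('o1 \<Rightarrow> 'o3) \<Rightarrow> ('m1 \<Rightarrow> 'm3) \<Rightarrow> ('o2 \<Rightarrow> 'o3) \<Rightarrow> ('m2 \<Rightarrow> 'm3) \<Rightarrow> bool" where
  "factorization C D E Fo Fm Go Gm Ho Hm \<longleftrightarrow> functor D E Ho Hm \<and>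
     (\<forall>A\<in>Obj C. Ho (Fo A) = Go A) \<and> (\<forall>f\<in>Mor C. Hm (Fm f) = Gm f)"

lemma quotient_functor_iff:
  fixes C :: "('o1,'m1) cat" and D :: "('o2,'m2) cat"
  shows "quotient_functor TYPE('o3 \<times> 'm3) C D Fo Fm \<longleftrightarrow> functor C D Fo Fm \<and>
    (\<forall>(E :: ('o3,'m3) cat) Go Gm. functor C E Go Gm \<longrightarrow>
       (\<forall>A\<in>Obj C. \<forall>B\<in>Obj C. Fo A = Fo B \<longrightarrow> Go A = Go B) \<longrightarrow>
       (\<exists>Ho Hm. factorization C D E Fo Fm Go Gm Ho Hm) \<and>
       (\<forall>Ho Hm Ho' Hm'. factorization C D E Fo Fm Go Gm Ho Hm \<longrightarrow>
          factorization C D E Fo Fm Go Gm Ho' Hm' \<longrightarrow>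
          (\<forall>A\<in>Obj D. Ho A = Ho' A) \<and> (\<forall>f\<in>Mor D. Hm f = Hm' f)))"
  unfolding quotient_functor_def factorization_def by blast

lemma quotient_functor_factorization:
  fixes E :: "('o3,'m3) cat"
  assumes "quotient_functor TYPE('o3 \<times> 'm3) C D Fo Fm" and "functor C E Go Gm"
    and "\<And>A B. A \<in> Obj C \<Longrightarrow> B \<in> Obj C \<Longrightarrow> Fo A = Fo B \<Longrightarrow> Go A = Go B"
  obtains Ho Hm where "factorization C D E Fo Fm Go Gm Ho Hm"
  using assms unfolding quotient_functor_iff by blast

lemma quotient_functor_factorization_unique:
  fixes E :: "('o3,'m3) cat"
  assumes Q: "quotient_functor TYPE('o3 \<times> 'm3) C D Fo Fm" and G: "functor C E Go Gm"
    and H: "factorization C D E Fo Fm Go Gm Ho Hm" and H': "factorization C D E Fo Fm Go Gm Ho' Hm'"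
  shows "(\<forall>A\<in>Obj D. Ho A = Ho' A) \<and> (\<forall>f\<in>Mor D. Hm f = Hm' f)"
proof -
  have "\<forall>A\<in>Obj C. \<forall>B\<in>Obj C. Fo A = Fo B \<longrightarrow> Go A = Go B"
    using H unfolding factorization_def by metis
  then show ?thesis using Q G H H' unfolding quotient_functor_iff by blast
qed

text \<open>Surjectivity on objects lets a functor that respects the composite quotient
  descend through the first one.\<close>

lemma quotient_functor_compose_factorization:
  fixes C :: "('o1,'m1) cat" and E :: "('x,'y) cat"
  assumes Q1: "quotient_functor TYPE('x \<times> 'y) C D Fo Fm"
    and Q2: "quotient_functor TYPE('x \<times> 'y) D D' Go Gm"
    and surj: "\<And>A. A \<in> Obj D \<Longrightarrow> \<exists>A'\<in>Obj C. Fo A' = A"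
    and K: "functor C E Ko Km"
    and respects: "\<forall>A\<in>Obj C. \<forall>B\<in>Obj C. Go (Fo A) = Go (Fo B) \<longrightarrow> Ko A = Ko B"
  obtains Ho Hm where "factorization C D' E (Go \<circ> Fo) (Gm \<circ> Fm) Ko Km Ho Hm"
proof -
  have F: "functor C D Fo Fm" using Q1 unfolding quotient_functor_iff by blast
  have "Ko A = Ko B" if "A \<in> Obj C" "B \<in> Obj C" "Fo A = Fo B" for A B
    using respects that by metis
  then obtain H1o H1m where H1: "factorization C D E Fo Fm Ko Km H1o H1m"
    by (rule quotient_functor_factorization[OF Q1 K])
  have "H1o A = H1o B" if A: "A \<in> Obj D" and B: "B \<in> Obj D" and AB: "Go A = Go B" for A B
  proof -
    obtain A' B' where A': "A' \<in> Obj C" "Fo A' = A" and B': "B' \<in> Obj C" "Fo B' = B"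
      using surj[OF A] surj[OF B] by blast
    then have "Ko A' = Ko B'" using respects AB by metis
    then show ?thesis using H1 A' B' unfolding factorization_def by auto
  qed
  moreover have "functor D E H1o H1m" using H1 unfolding factorization_def by blast
  ultimately obtain H2o H2m where "factorization D D' E Go Gm H1o H1m H2o H2m"
    using quotient_functor_factorization[OF Q2] by blast
  then have "factorization C D' E (Go \<circ> Fo) (Gm \<circ> Fm) Ko Km H2o H2m"
    using H1 functor_obj[OF F] functor_mor[OF F] unfolding factorization_def by auto
  then show thesis by (rule that)
qed

lemma quotient_functor_compose_factorization_unique:
  fixes C :: "('o1,'m1) cat" and E :: "('x,'y) cat"
  assumes Q1: "quotient_functor TYPE('x \<times> 'y) C D Fo Fm"
    and Q2: "quotient_functor TYPE('x \<times> 'y) D D' Go Gm"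
    and K: "functor C E Ko Km"
    and H: "factorization C D' E (Go \<circ> Fo) (Gm \<circ> Fm) Ko Km Ho Hm"
    and H': "factorization C D' E (Go \<circ> Fo) (Gm \<circ> Fm) Ko Km Ho' Hm'"
  shows "(\<forall>A\<in>Obj D'. Ho A = Ho' A) \<and> (\<forall>f\<in>Mor D'. Hm f = Hm' f)"
proof -
  have G: "functor D D' Go Gm" using Q2 unfolding quotient_functor_iff by blast
  have "factorization C D E Fo Fm Ko Km (Ho \<circ> Go) (Hm \<circ> Gm)"
    "factorization C D E Fo Fm Ko Km (Ho' \<circ> Go) (Hm' \<circ> Gm)"
    using H H' functor_compose[OF G] unfolding factorization_def by auto
  from quotient_functor_factorization_unique[OF Q1 K this]
  have "(\<forall>A\<in>Obj D. Ho (Go A) = Ho' (Go A)) \<and> (\<forall>f\<in>Mor D. Hm (Gm f) = Hm' (Gm f))"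
    by simp
  then have "factorization D D' E Go Gm (Ho \<circ> Go) (Hm \<circ> Gm) Ho Hm"
    "factorization D D' E Go Gm (Ho \<circ> Go) (Hm \<circ> Gm) Ho' Hm'"
    using H H' unfolding factorization_def by auto
  moreover have "functor D E (Ho \<circ> Go) (Hm \<circ> Gm)"
    using functor_compose[OF G] H unfolding factorization_def by blast
  ultimately show ?thesis
    using quotient_functor_factorization_unique[OF Q2] by blast
qed

lemma quotient_functor_compose:
  fixes C :: "('o1,'m1) cat"
  assumes Q1: "quotient_functor TYPE('x \<times> 'y) C D Fo Fm"
    and Q2: "quotient_functor TYPE('x \<times> 'y) D D' Go Gm"
    and surj: "\<And>A. A \<in> Obj D \<Longrightarrow> \<exists>A'\<in>Obj C. Fo A' = A"
  shows "quotient_functor TYPE('x \<times> 'y) C D' (Go \<circ> Fo) (Gm \<circ> Fm)"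
  unfolding quotient_functor_iff
proof (intro conjI allI impI)
  have "functor C D Fo Fm" "functor D D' Go Gm" using Q1 Q2 unfolding quotient_functor_iff by auto
  then show "functor C D' (Go \<circ> Fo) (Gm \<circ> Fm)" by (rule functor_compose)
  fix E :: "('x,'y) cat" and Ko Km
  assume K: "functor C E Ko Km"
    and respects: "\<forall>A\<in>Obj C. \<forall>B\<in>Obj C. (Go \<circ> Fo) A = (Go \<circ> Fo) B \<longrightarrow> Ko A = Ko B"
  from respects have R: "\<forall>A\<in>Obj C. \<forall>B\<in>Obj C. Go (Fo A) = Go (Fo B) \<longrightarrow> Ko A = Ko B"
    unfolding comp_apply .
  obtain Ho Hm where "factorization C D' E (Go \<circ> Fo) (Gm \<circ> Fm) Ko Km Ho Hm"
    by (rule quotient_functor_compose_factorization[OF Q1 Q2 _ K R]) (rule surj)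
  then show "\<exists>Ho Hm. factorization C D' E (Go \<circ> Fo) (Gm \<circ> Fm) Ko Km Ho Hm" by blast
  fix Ho Hm Ho' Hm'
  assume "factorization C D' E (Go \<circ> Fo) (Gm \<circ> Fm) Ko Km Ho Hm"
    and "factorization C D' E (Go \<circ> Fo) (Gm \<circ> Fm) Ko Km Ho' Hm'"
  from quotient_functor_compose_factorization_unique[OF Q1 Q2 K this]
  show "\<forall>A\<in>Obj D'. Ho A = Ho' A" "\<forall>f\<in>Mor D'. Hm f = Hm' f" by auto
qed

section \<open>Fibers\<close>

lemma fiber_simps [simp]:
  "Obj (fiber N1 N2 Fo Fm A2) = {A\<in>Obj N1. Fo A = A2}"
  "Mor (fiber N1 N2 Fo Fm A2) = {f\<in>Mor N1. Fm f = Idm N2 A2}"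
  "Dom (fiber N1 N2 Fo Fm A2) = Dom N1" "Cod (fiber N1 N2 Fo Fm A2) = Cod N1"
  "Idm (fiber N1 N2 Fo Fm A2) = Idm N1" "Cmp (fiber N1 N2 Fo Fm A2) = Cmp N1"
  by (simp_all add: fiber_def)

lemma is_identity_fiber_iff [simp]: "is_identity (fiber N1 N2 Fo Fm A2) f \<longleftrightarrow> is_identity N1 f"
  by (simp add: is_identity_def)

lemma flag_fiber_iff: "flag (fiber N1 N2 Fo Fm A2) f \<longleftrightarrow> flag N1 f \<and> Fm f = Idm N2 A2"
  by (auto simp: flag_def)

lemma vertex_fiber_iff:
  "vertex (fiber N1 N2 Fo Fm A2) v \<longleftrightarrow>
    v \<in> Obj N1 \<and> Fo v = A2 \<and> (\<forall>f. flag N1 f \<longrightarrow> Dom N1 f = v \<longrightarrow> Fm f \<noteq> Idm N2 A2)"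
  by (auto simp: vertex_def flag_fiber_iff)

lemma fiber_category:
  assumes F: "functor N1 N2 Fo Fm" and A2: "A2 \<in> Obj N2"
  shows "category (fiber N1 N2 Fo Fm A2)"
proof -
  have C1: "category N1" using F by (rule functor_source_category)
  have C2: "category N2" using F by (rule functor_target_category)
  have ends: "Fo (Dom N1 f) = A2 \<and> Fo (Cod N1 f) = A2" if "f \<in> Mor N1" "Fm f = Idm N2 A2" for f
    using that functor_dom[OF F] functor_cod[OF F] category_id_dom[OF C2 A2] category_id_cod[OF C2 A2]
    by metis
  have comp: "Fm (Cmp N1 g f) = Idm N2 A2"
    if "f \<in> Mor N1" "g \<in> Mor N1" "Cod N1 f = Dom N1 g" "Fm f = Idm N2 A2" "Fm g = Idm N2 A2" for f g
    using that functor_comp[OF F] category_id_left[OF C2 category_id[OF C2 A2]]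
      category_id_cod[OF C2 A2] by metis
  show ?thesis
    using C1 ends comp functor_id[OF F]
    unfolding category_def by auto
qed

lemma fiber_nested_graph:
  assumes N1: "nested_graph N1" and F: "functor N1 N2 Fo Fm" and A2: "A2 \<in> Obj N2"
  shows "nested_graph (fiber N1 N2 Fo Fm A2)"
proof -
  have C: "category (fiber N1 N2 Fo Fm A2)" using F A2 by (rule fiber_category)
  obtain n Go Gm where G: "functor N1 (ord_cat n) Go Gm"
    and faithful: "\<forall>f\<in>Mor N1. \<not> is_identity N1 f \<longrightarrow> \<not> is_identity (ord_cat n) (Gm f)"
    using N1 unfolding nested_graph_def by blast
  have "functor (fiber N1 N2 Fo Fm A2) (ord_cat n) Go Gm"
    using C G unfolding functor_def by auto
  then show ?thesis unfolding nested_graph_def using C faithful by auto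
qed

lemma corolla_vertex_unique: "corolla N \<Longrightarrow> vertex N v \<Longrightarrow> vertex N w \<Longrightarrow> v = w"
  unfolding corolla_def by blast

lemma functor_comp_contracted_first:
  assumes F: "functor C D Fo Fm" and i: "i \<in> Mor C" and r: "r \<in> Mor C"
    and ir: "Cod C i = Dom C r" and contracted: "is_identity D (Fm i)"
  shows "Fm (Cmp C r i) = Fm r" and "Fo (Dom C r) = Fo (Dom C i)"
proof -
  have D: "category D" using F by (rule functor_target_category)
  have Fi: "Fm i = Idm D (Fo (Dom C i))"
    using contracted functor_is_identity_iff[OF F i] by simp
  then show dom_r: "Fo (Dom C r) = Fo (Dom C i)"
    using functor_cod[OF F i] ir category_id_cod[OF D functor_obj[OF F category_dom[OF functor_source_category[OF F] i]]]
    by simp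
  show "Fm (Cmp C r i) = Fm r"
    using functor_comp[OF F i r ir] Fi dom_r category_id_right[OF D functor_mor[OF F r]]
      functor_dom[OF F r] by simp
qed

text \<open>A contracted flag out of the node has a contracted irreducible first factor, so by
  admissibility the irreducible first factor of f is contracted as well.\<close>

lemma admissible_contracted_first_factor:
  assumes N1: "nested_graph N1" and N2: "nested_graph N2" and A: "admissible N1 N2 Fo Fm"
    and f: "flag N1 f" and not_vertex: "\<not> vertex (fiber N1 N2 Fo Fm (Fo (Dom N1 f))) (Dom N1 f)"
  obtains i r where "irreducible_flag N1 i" "r \<in> Mor N1" "Cod N1 i = Dom N1 r" "f = Cmp N1 r i"
    "is_identity N2 (Fm i)"
proof -
  have F: "functor N1 N2 Fo Fm" using A by (rule admissible_functor)
  have "Dom N1 f \<in> Obj N1"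
    using f category_dom[OF nested_graph_category[OF N1]] unfolding flag_def by blast
  then obtain g where g: "flag N1 g" "Dom N1 g = Dom N1 f" "Fm g = Idm N2 (Fo (Dom N1 f))"
    using not_vertex by (auto simp: vertex_fiber_iff)
  obtain i r where i: "irreducible_flag N1 i" "Dom N1 i = Dom N1 f" and r: "r \<in> Mor N1"
    and ir: "Cod N1 i = Dom N1 r" and g_eq: "g = Cmp N1 r i"
    using flag_irreducible_first_factor[OF N1 g(1)] g(2) by metis
  have im: "i \<in> Mor N1" using i(1) by (rule irreducible_flag_mor)
  have "is_identity N2 (Cmp N2 (Fm r) (Fm i))"
    using g functor_comp[OF F im r ir] functor_is_identity_iff[OF F] g_eq
    unfolding flag_def by metis
  then have i_contracted: "is_identity N2 (Fm i)"
    using nested_graph_identity_factor[OF N2 functor_mor[OF F im] functor_mor[OF F r]]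
      functor_cod[OF F im] functor_dom[OF F r] ir by metis
  obtain i' r' where i': "irreducible_flag N1 i'" "Dom N1 i' = Dom N1 f" and r': "r' \<in> Mor N1"
    and "Cod N1 i' = Dom N1 r'" "f = Cmp N1 r' i'"
    using flag_irreducible_first_factor[OF N1 f] by metis
  moreover have "is_identity N2 (Fm i')"
    using admissible_contracts_siblings[OF A i(1) i_contracted i'(1)] i(2) i'(2) by simp
  ultimately show thesis using that by blast
qed

lemma admissible_lift_to_fiber_vertex:
  assumes N1: "nested_graph N1" and N2: "nested_graph N2" and A: "admissible N1 N2 Fo Fm"
    and f: "f \<in> Mor N1" and f_nid: "\<not> is_identity N2 (Fm f)"
  obtains f' where "f' \<in> Mor N1" "Fm f' = Fm f"
    "vertex (fiber N1 N2 Fo Fm (Fo (Dom N1 f))) (Dom N1 f')"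
proof -
  have F: "functor N1 N2 Fo Fm" using A by (rule admissible_functor)
  obtain d :: "_ \<Rightarrow> nat" where
    d_comp: "\<And>f g. f \<in> Mor N1 \<Longrightarrow> g \<in> Mor N1 \<Longrightarrow> Cod N1 f = Dom N1 g \<Longrightarrow> d (Cmp N1 g f) = d f + d g"
    and d_flag: "\<And>f. flag N1 f \<Longrightarrow> 0 < d f"
    by (rule nested_graph_degree[OF N1]) blast
  have "\<exists>f'. f' \<in> Mor N1 \<and> Fm f' = Fm f \<and> vertex (fiber N1 N2 Fo Fm (Fo (Dom N1 f))) (Dom N1 f')"
    using f f_nid
  proof (induction f rule: measure_induct_rule[of d])
    case (less f)
    show ?case
    proof (cases "vertex (fiber N1 N2 Fo Fm (Fo (Dom N1 f))) (Dom N1 f)")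
      case True
      then show ?thesis using less.prems by blast
    next
      case False
      have "flag N1 f"
        using less.prems functor_preserves_identity[OF F] unfolding flag_def by blast
      then obtain i r where i: "irreducible_flag N1 i" and r: "r \<in> Mor N1"
        and ir: "Cod N1 i = Dom N1 r" and f_eq: "f = Cmp N1 r i" and contracted: "is_identity N2 (Fm i)"
        using False by (rule admissible_contracted_first_factor[OF N1 N2 A])
      have im: "i \<in> Mor N1" using i by (rule irreducible_flag_mor)
      have "d r < d f"
        using d_comp[OF im r ir] d_flag i f_eq unfolding irreducible_flag_def by simp
      moreover have "Fm f = Fm r" "Fo (Dom N1 r) = Fo (Dom N1 f)"
        using functor_comp_contracted_first[OF F im r ir contracted] f_eq
          category_comp_dom[OF nested_graph_category[OF N1] im r ir] by simp_all
      ultimately show ?thesis using less.IH[OF _ r] less.prems(2) by metis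
    qed
  qed
  then show thesis using that by blast
qed

lemma vertex_composite_fiber_imp_vertex_fiber:
  assumes F: "functor N1 N2 Fo Fm" and G: "functor N2 N3 Go Gm"
    and w: "vertex (fiber N1 N3 (Go \<circ> Fo) (Gm \<circ> Fm) A3) w"
  shows "vertex (fiber N1 N2 Fo Fm (Fo w)) w"
proof -
  have "w \<in> Obj N1" and "Go (Fo w) = A3" using w by (auto simp: vertex_fiber_iff)
  then show ?thesis
    using w functor_id[OF G functor_obj[OF F]] by (auto simp: vertex_fiber_iff)
qed

lemma vertex_fiber_imp_vertex_composite_fiber:
  assumes F: "functor N1 N2 Fo Fm" and G: "functor N2 N3 Go Gm"
    and v2: "vertex (fiber N2 N3 Go Gm A3) v2" and v1: "vertex (fiber N1 N2 Fo Fm v2) v1"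
  shows "vertex (fiber N1 N3 (Go \<circ> Fo) (Gm \<circ> Fm) A3) v1"
proof -
  have "Fm f = Idm N2 v2" if f: "flag N1 f" "Dom N1 f = v1" "Gm (Fm f) = Idm N3 A3" for f
  proof -
    have fm: "f \<in> Mor N1" using f(1) unfolding flag_def by blast
    have "Dom N2 (Fm f) = v2" using functor_dom[OF F fm] f(2) v1 by (simp add: vertex_fiber_iff)
    then have "is_identity N2 (Fm f)"
      using v2 f(3) functor_mor[OF F fm] by (auto simp: vertex_fiber_iff flag_def)
    then show ?thesis using functor_is_identity_iff[OF F fm] f(2) v1 by (simp add: vertex_fiber_iff)
  qed
  then show ?thesis using v1 v2 by (auto simp: vertex_fiber_iff)
qed

lemma contraction_vertex_image_vertex:
  assumes N1: "nested_graph N1" and N2: "nested_graph N2" and N3: "nested_graph N3"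
    and K: "contraction N1 N2 Fo Fm" and G: "functor N2 N3 Go Gm"
    and w: "vertex (fiber N1 N3 (Go \<circ> Fo) (Gm \<circ> Fm) A3) w"
  shows "vertex (fiber N2 N3 Go Gm A3) (Fo w)"
proof -
  have A: "admissible N1 N2 Fo Fm" and E: "epi_functor N1 N2 Fo Fm"
    and corollas: "\<forall>A2\<in>Obj N2. corolla (fiber N1 N2 Fo Fm A2)"
    using K unfolding contraction_def by auto
  have F: "functor N1 N2 Fo Fm" using A by (rule admissible_functor)
  have w_obj: "w \<in> Obj N1" and w_A3: "Go (Fo w) = A3" using w by (auto simp: vertex_fiber_iff)
  have w_vertex: "vertex (fiber N1 N2 Fo Fm (Fo w)) w"
    using vertex_composite_fiber_imp_vertex_fiber[OF F G w] .
  have False if g: "flag N2 g" "Dom N2 g = Fo w" "Gm g = Idm N3 A3" for g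
  proof -
    have gm: "g \<in> Mor N2" and g_nid: "\<not> is_identity N2 g" using g(1) unfolding flag_def by auto
    have "g \<in> generated_by_image N1 N2 Fm" using E gm unfolding epi_functor_def by blast
    then obtain f h where f: "f \<in> Mor N1" and h: "h \<in> Mor N2" and Ff_nid: "\<not> is_identity N2 (Fm f)"
      and Ff_dom: "Dom N2 (Fm f) = Fo w" and fh: "Cod N2 (Fm f) = Dom N2 h"
      and g_eq: "g = Cmp N2 h (Fm f)"
      using generated_by_image_first_factor[OF F _ g_nid] g(2) by metis
    have Ff: "Fm f \<in> Mor N2" using functor_mor[OF F f] .
    have "is_identity N3 (Cmp N3 (Gm h) (Gm (Fm f)))"
      using g(2,3) g_eq functor_comp[OF G Ff h fh] functor_is_identity_iff[OF G gm] w_A3 by metis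
    then have GFf: "Gm (Fm f) = Idm N3 A3"
      using nested_graph_identity_factor[OF N3 functor_mor[OF G Ff] functor_mor[OF G h]]
        functor_cod[OF G Ff] functor_dom[OF G h] fh functor_is_identity_iff[OF G Ff] Ff_dom w_A3
      by metis
    obtain f' where f': "f' \<in> Mor N1" "Fm f' = Fm f"
      and f'_vertex: "vertex (fiber N1 N2 Fo Fm (Fo (Dom N1 f))) (Dom N1 f')"
      by (rule admissible_lift_to_fiber_vertex[OF N1 N2 A f Ff_nid])
    have "Fo (Dom N1 f) = Fo w" using functor_dom[OF F f] Ff_dom by simp
    with f'_vertex have "vertex (fiber N1 N2 Fo Fm (Fo w)) (Dom N1 f')" by simp
    moreover have "corolla (fiber N1 N2 Fo Fm (Fo w))" using corollas functor_obj[OF F w_obj] by blast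
    ultimately have "Dom N1 f' = w" using corolla_vertex_unique w_vertex by metis
    moreover have "flag N1 f'"
      using f' Ff_nid functor_preserves_identity[OF F] unfolding flag_def by metis
    ultimately show False using w GFf f' by (auto simp: vertex_fiber_iff)
  qed
  then show ?thesis using w_obj w_A3 functor_obj[OF F] by (auto simp: vertex_fiber_iff)
qed

lemma contraction_compose:
  assumes N1: "nested_graph N1" and N2: "nested_graph N2" and N3: "nested_graph N3"
    and K1: "contraction N1 N2 Fo Fm" and K2: "contraction N2 N3 Go Gm"
  shows "contraction N1 N3 (Go \<circ> Fo) (Gm \<circ> Fm)"
proof -
  have A1: "admissible N1 N2 Fo Fm" and E1: "epi_functor N1 N2 Fo Fm"
    and corollas1: "\<forall>A2\<in>Obj N2. corolla (fiber N1 N2 Fo Fm A2)"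
    using K1 unfolding contraction_def by auto
  have A2: "admissible N2 N3 Go Gm" and E2: "epi_functor N2 N3 Go Gm"
    and corollas2: "\<forall>A3\<in>Obj N3. corolla (fiber N2 N3 Go Gm A3)"
    using K2 unfolding contraction_def by auto
  have F: "functor N1 N2 Fo Fm" using A1 by (rule admissible_functor)
  have G: "functor N2 N3 Go Gm" using A2 by (rule admissible_functor)
  have "corolla (fiber N1 N3 (Go \<circ> Fo) (Gm \<circ> Fm) A3)" if A3: "A3 \<in> Obj N3" for A3
  proof -
    obtain v2 where v2: "vertex (fiber N2 N3 Go Gm A3) v2"
      using corollas2 A3 unfolding corolla_def by blast
    then have "v2 \<in> Obj N2" by (simp add: vertex_fiber_iff)
    then obtain v1 where v1: "vertex (fiber N1 N2 Fo Fm v2) v1"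
      using corollas1 unfolding corolla_def by blast
    have "w = v1" if w: "vertex (fiber N1 N3 (Go \<circ> Fo) (Gm \<circ> Fm) A3) w" for w
    proof -
      have "Fo w = v2"
        using contraction_vertex_image_vertex[OF N1 N2 N3 K1 G w] v2 corollas2 A3
          corolla_vertex_unique by metis
      then show ?thesis
        using vertex_composite_fiber_imp_vertex_fiber[OF F G w] v1 corollas1 \<open>v2 \<in> Obj N2\<close>
          corolla_vertex_unique by metis
    qed
    then show ?thesis
      unfolding corolla_def
      using fiber_nested_graph[OF N1 functor_compose[OF F G] A3]
        vertex_fiber_imp_vertex_composite_fiber[OF F G v2 v1] by blast
  qed
  then show ?thesis
    unfolding contraction_def using admissible_compose[OF A1 A2] epi_functor_compose[OF E1 E2]
    by blast
qed

lemma merger_compose: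
  assumes M1: "merger TYPE('x \<times> 'y) N1 N2 Fo Fm" and M2: "merger TYPE('x \<times> 'y) N2 N3 Go Gm"
  shows "merger TYPE('x \<times> 'y) N1 N3 (Go \<circ> Fo) (Gm \<circ> Fm)"
proof -
  have A1: "admissible N1 N2 Fo Fm" and E1: "epi_functor N1 N2 Fo Fm"
    and Q1: "quotient_functor TYPE('x \<times> 'y) N1 N2 Fo Fm"
    using M1 unfolding merger_def by auto
  have A2: "admissible N2 N3 Go Gm" and E2: "epi_functor N2 N3 Go Gm"
    and Q2: "quotient_functor TYPE('x \<times> 'y) N2 N3 Go Gm"
    using M2 unfolding merger_def by auto
  show ?thesis
    unfolding merger_def
    using admissible_compose[OF A1 A2] epi_functor_compose[OF E1 E2]
      quotient_functor_compose[OF Q1 Q2 epi_functor_obj_surj[OF E1]] by blast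
qed

theorem mainTheorem2:
  fixes N1 :: "('o1,'m1) cat" and N2 :: "('o2,'m2) cat" and N3 :: "('o3,'m3) cat"
    and mu1o :: "'o1 \<Rightarrow> 'o2" and mu1m :: "'m1 \<Rightarrow> 'm2"
    and mu2o :: "'o2 \<Rightarrow> 'o3" and mu2m :: "'m2 \<Rightarrow> 'm3"
    and k1o :: "'o1 \<Rightarrow> 'o2" and k1m :: "'m1 \<Rightarrow> 'm2"
    and k2o :: "'o2 \<Rightarrow> 'o3" and k2m :: "'m2 \<Rightarrow> 'm3"
  assumes "nested_graph N1" and "nested_graph N2" and "nested_graph N3"
  shows "(merger TYPE('x \<times> 'y) N1 N2 mu1o mu1m \<and> merger TYPE('x \<times> 'y) N2 N3 mu2o mu2m
            \<longrightarrow> merger TYPE('x \<times> 'y) N1 N3 (mu2o \<circ> mu1o) (mu2m \<circ> mu1m))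
       \<and> (contraction N1 N2 k1o k1m \<and> contraction N2 N3 k2o k2m
            \<longrightarrow> contraction N1 N3 (k2o \<circ> k1o) (k2m \<circ> k1m))"
  using merger_compose contraction_compose[OF assms] by blast

end
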